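(* Let $\lambda\in\mathbf{C}$ with $\lambda\neq1$. For every $n\in\mathbf{Z}_{+}$ (nonnegative integers), \[ \frac{1}{n+1}\sum_{k=0}^{n}H_{k}(x\vert\lambda)H_{n-k}(x\vert\lambda) =\sum_{k=0}^{n-1}\frac{\binom{n}{k}}{n-k+1}\Bigl\{-\lambda\sum_{l=k}^{n}H_{l-k}(\lambda)H_{n-l}(\lambda)+2\lambda H_{n-k}(\lambda)\Bigr\}H_{k}(x\vert\lambda)+H_{n}(x\vert\lambda). \]
   Context: For $\lambda\in\mathbf{C}$, $\lambda\neq1$, the Frobenius–Euler polynomials $H_n(x\vert\lambda)$ are defined by the generating function $\frac{1-\lambda}{e^{t}-\lambda}e^{xt}=\sum_{n=0}^{\infty}H_{n}(x\vert\lambda)\frac{t^{n}}{n!}$, and the Frobenius–Euler numbers are $H_n(\lambda)=H_n(0\vert\lambda)$. An empty sum (e.g. when $n=0$) is $0$. *)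

theory Defs
  imports Complex_Main "HOL-Computational_Algebra.Formal_Power_Series"
begin

definition FE_gf :: "complex \<Rightarrow> complex \<Rightarrow> complex fps" where
  "FE_gf lam x = fps_const (1 - lam) * inverse (fps_exp 1 - fps_const lam) * fps_exp x"

definition FE_poly :: "nat \<Rightarrow> complex \<Rightarrow> complex \<Rightarrow> complex" where
  "FE_poly n x lam = fact n * fps_nth (FE_gf lam x) n"

definition FE_num :: "nat \<Rightarrow> complex \<Rightarrow> complex" where
  "FE_num n lam = FE_poly n 0 lam"

end

theory Submission
  imports Defs
begin

text \<open>
  Write h_k = H_k(\<lambda>) and G(t) = (1 - \<lambda>)/(e^t - \<lambda>). As the generating function of the
  H_n(x|\<lambda>) is G(t) e^(xt), they form an Appell sequence: H_n(x) = \<Sum>_k C(n,k) h_k x^(n-k).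
  The identity \<Sum>_k C(k,i) C(n-k,j) = C(n+1,i+j+1) shows that (1/(n+1)) \<Sum>_k H_k(x) H_(n-k)(x)
  is again an Appell sequence, with coefficients a_m = (1/(m+1)) \<Sum>_i h_i h_(m-i). At x = 1 we have
  H_k(1) = \<lambda> h_k + (1 - \<lambda>) \<delta>_k0, and the Appell relation there becomes
  \<Sum>_i C(m,i) a_i = \<lambda> a_m + (1 - \<lambda>) d_m. For the exponential generating functions A, D of a, d
  this says A(t) (e^t - \<lambda>) = (1 - \<lambda>) D(t), i.e. A = G D; the theorem compares the coefficients of
  A(t) e^(xt) = (G(t) e^(xt)) D(t).
\<close>

definition egf :: "(nat \<Rightarrow> 'a::field_char_0) \<Rightarrow> 'a fps" where
  "egf a = Abs_fps (\<lambda>n. a n / fact n)"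

lemma egf_nth [simp]: "fps_nth (egf a) n = a n / fact n"
  by (simp add: egf_def)

lemma egf_inject: "egf a = egf b \<longleftrightarrow> a = b"
  by (auto simp: fps_eq_iff fun_eq_iff)

lemma egf_lincomb:
  "egf (\<lambda>n. c * a n + d * b n) = fps_const c * egf a + fps_const d * egf b"
  by (simp add: fps_eq_iff add_divide_distrib)

lemma egf_mult:
  "egf a * egf b = egf (\<lambda>n. \<Sum>i\<le>n. of_nat (n choose i) * a i * b (n - i))"
proof (rule fps_ext)
  fix n
  have "fps_nth (egf a * egf b) n = (\<Sum>i\<le>n. a i / fact i * (b (n - i) / fact (n - i)))"
    by (simp add: fps_mult_nth atLeast0AtMost)
  also have "\<dots> = (\<Sum>i\<le>n. of_nat (n choose i) * a i * b (n - i)) / fact n"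
    unfolding sum_divide_distrib
    by (intro sum.cong refl) (simp add: binomial_fact field_simps)
  finally show "fps_nth (egf a * egf b) n
      = fps_nth (egf (\<lambda>n. \<Sum>i\<le>n. of_nat (n choose i) * a i * b (n - i))) n"
    by simp
qed

lemma fps_exp_eq_egf: "fps_exp c = egf (\<lambda>n. c ^ n)"
  by (simp add: fps_eq_iff)

definition appell_poly :: "(nat \<Rightarrow> 'a::comm_semiring_1) \<Rightarrow> nat \<Rightarrow> 'a \<Rightarrow> 'a" where
  "appell_poly a n x = (\<Sum>i\<le>n. of_nat (n choose i) * a i * x ^ (n - i))"

lemma egf_mult_fps_exp: "egf a * fps_exp x = egf (\<lambda>n. appell_poly a n x)"
  by (simp add: fps_exp_eq_egf egf_mult appell_poly_def)

lemma appell_poly_pad: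
  assumes "n \<le> N"
  shows "appell_poly a n x = (\<Sum>i\<le>N. of_nat (n choose i) * a i * x ^ (n - i))"
  unfolding appell_poly_def
  by (rule sum.mono_neutral_left) (use assms in \<open>auto simp: binomial_eq_0\<close>)

lemma sum_choose_mult_choose_diff:
  "(\<Sum>k\<le>n. (k choose i) * ((n - k) choose j)) = Suc n choose (i + j + 1)"
proof (induction n arbitrary: j)
  case 0
  then show ?case by (cases i; cases j) auto
next
  case (Suc n)
  show ?case
  proof (cases j)
    case 0
    then show ?thesis
      using sum_choose_upper[of i "Suc n"] by (simp del: sum.atMost_Suc binomial_Suc_Suc)
  next
    case (Suc j')
    have "(\<Sum>k\<le>Suc n. (k choose i) * ((Suc n - k) choose j))
        = (\<Sum>k\<le>n. (k choose i) * ((n - k) choose j) + (k choose i) * ((n - k) choose j'))"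
      by (simp add: Suc Suc_diff_le algebra_simps)
    also have "\<dots> = (Suc n choose (i + j + 1)) + (Suc n choose (i + j' + 1))"
      by (simp add: sum.distrib Suc.IH)
    finally show ?thesis
      using Suc by simp
  qed
qed

lemma appell_poly_mult_expand:
  fixes a :: "nat \<Rightarrow> 'a::comm_semiring_1"
  assumes "k \<le> n"
  shows "appell_poly a k x * appell_poly a (n - k) x
    = (\<Sum>i\<le>n. \<Sum>j\<le>n. of_nat ((k choose i) * ((n - k) choose j)) * (a i * a j * x ^ (n - i - j)))"
proof -
  have "appell_poly a k x * appell_poly a (n - k) x
      = (\<Sum>i\<le>n. \<Sum>j\<le>n. of_nat (k choose i) * a i * x ^ (k - i)
                          * (of_nat ((n - k) choose j) * a j * x ^ (n - k - j)))"
    using assms by (simp add: appell_poly_pad[of k n] appell_poly_pad[of "n - k" n] sum_product)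
  also have "\<dots> = (\<Sum>i\<le>n. \<Sum>j\<le>n. of_nat ((k choose i) * ((n - k) choose j)) * (a i * a j * x ^ (n - i - j)))"
  proof (intro sum.cong refl)
    fix i j
    show "of_nat (k choose i) * a i * x ^ (k - i) * (of_nat ((n - k) choose j) * a j * x ^ (n - k - j))
        = of_nat ((k choose i) * ((n - k) choose j)) * (a i * a j * x ^ (n - i - j))"
    proof (cases "i \<le> k \<and> j \<le> n - k")
      case True
      then have "k - i + (n - k - j) = n - i - j"
        using assms by linarith
      then have "x ^ (k - i) * x ^ (n - k - j) = x ^ (n - i - j)"
        by (metis power_add)
      then show ?thesis
        by (simp add: algebra_simps)
    qed (auto simp: binomial_eq_0 not_le)
  qed
  finally show ?thesis .
qed

lemma sum_appell_poly_mult: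
  fixes a :: "nat \<Rightarrow> 'a::comm_semiring_1"
  shows "(\<Sum>k\<le>n. appell_poly a k x * appell_poly a (n - k) x)
    = (\<Sum>m\<le>n. of_nat (Suc n choose Suc m) * (\<Sum>i\<le>m. a i * a (m - i)) * x ^ (n - m))"
proof -
  define F where "F i j = of_nat (Suc n choose (i + j + 1)) * (a i * a j * x ^ (n - i - j))" for i j
  have "(\<Sum>k\<le>n. appell_poly a k x * appell_poly a (n - k) x)
      = (\<Sum>k\<le>n. \<Sum>i\<le>n. \<Sum>j\<le>n. of_nat ((k choose i) * ((n - k) choose j)) * (a i * a j * x ^ (n - i - j)))"
    by (intro sum.cong refl) (simp add: appell_poly_mult_expand)
  also have "\<dots> = (\<Sum>i\<le>n. \<Sum>j\<le>n. \<Sum>k\<le>n. of_nat ((k choose i) * ((n - k) choose j)) * (a i * a j * x ^ (n - i - j)))"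
    by (subst sum.swap) (intro sum.cong refl sum.swap)
  also have "\<dots> = (\<Sum>i\<le>n. \<Sum>j\<le>n. F i j)"
    unfolding F_def
    by (intro sum.cong refl)
      (simp only: flip: sum_choose_mult_choose_diff, simp only: of_nat_sum sum_distrib_right)
  also have "\<dots> = (\<Sum>(i, j)\<in>{(i, j). i + j \<le> n}. F i j)"
  proof -
    have "F i j = 0" if "n < i + j" for i j
      using that by (simp add: F_def binomial_eq_0 del: binomial_Suc_Suc)
    then show ?thesis
      unfolding sum.cartesian_product by (intro sum.mono_neutral_right) (auto simp: not_le[symmetric])
  qed
  also have "\<dots> = (\<Sum>m\<le>n. \<Sum>i\<le>m. F i (m - i))"
    by (rule sum.triangle_reindex_eq)
  also have "\<dots> = (\<Sum>m\<le>n. of_nat (Suc n choose Suc m) * (\<Sum>i\<le>m. a i * a (m - i)) * x ^ (n - m))"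
    by (intro sum.cong refl) (simp add: F_def sum_distrib_left sum_distrib_right algebra_simps)
  finally show ?thesis .
qed

definition self_conv_mean :: "(nat \<Rightarrow> 'a::field_char_0) \<Rightarrow> nat \<Rightarrow> 'a" where
  "self_conv_mean a m = (\<Sum>i\<le>m. a i * a (m - i)) / of_nat (Suc m)"

lemma sum_appell_poly_mult_div:
  fixes a :: "nat \<Rightarrow> 'a::field_char_0"
  shows "(\<Sum>k\<le>n. appell_poly a k x * appell_poly a (n - k) x) / of_nat (Suc n)
    = appell_poly (self_conv_mean a) n x"
proof -
  have binomial_ratio:
    "of_nat (Suc n choose Suc m) * z / of_nat (Suc n) = of_nat (n choose m) * z / (of_nat (Suc m) :: 'a)"
    for m z
  proof -
    have "of_nat (Suc m) * of_nat (Suc n choose Suc m) = (of_nat (Suc n) * of_nat (n choose m) :: 'a)"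
      by (simp only: Suc_times_binomial flip: of_nat_mult)
    then show ?thesis
      by (simp add: field_simps del: of_nat_Suc binomial_Suc_Suc)
  qed
  show ?thesis
    unfolding sum_appell_poly_mult sum_divide_distrib
    unfolding appell_poly_def self_conv_mean_def
    by (intro sum.cong refl)
      (simp only: mult.assoc times_divide_eq_left times_divide_eq_right binomial_ratio)
qed

lemma sum_mult_rev_add_delta:
  fixes a :: "nat \<Rightarrow> 'a::comm_ring_1"
  shows "(\<Sum>k\<le>m. (c * a k + (if k = 0 then d else 0)) * (c * a (m - k) + (if m - k = 0 then d else 0)))
    = c\<^sup>2 * (\<Sum>k\<le>m. a k * a (m - k)) + 2 * c * d * a m + (if m = 0 then d\<^sup>2 else 0)"
proof -
  have "(\<Sum>k\<le>m. (c * a k + (if k = 0 then d else 0)) * (c * a (m - k) + (if m - k = 0 then d else 0)))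
      = (\<Sum>k\<le>m. c\<^sup>2 * (a k * a (m - k)) + (if k = m then c * d * a m else 0)
          + (if k = 0 then c * d * a m else 0) + (if k = 0 \<and> m = 0 then d\<^sup>2 else 0))"
    by (intro sum.cong refl) (auto simp: algebra_simps power2_eq_square)
  then show ?thesis
    by (simp add: sum.distrib sum_distrib_left)
qed

lemma FE_gf_eq_egf: "FE_gf lam x = egf (\<lambda>n. FE_poly n x lam)"
  by (simp add: fps_eq_iff FE_poly_def)

lemma FE_gf_eq_FE_gf_0_mult_exp: "FE_gf lam x = FE_gf lam 0 * fps_exp x"
proof -
  have "fps_exp 0 = (1 :: complex fps)"
    by (simp add: fps_eq_iff)
  then show ?thesis
    by (simp add: FE_gf_def)
qed

lemma FE_gf_0_mult_denominator:
  assumes "lam \<noteq> 1"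
  shows "FE_gf lam 0 * (fps_exp 1 - fps_const lam) = fps_const (1 - lam)"
proof -
  have "inverse (fps_exp 1 - fps_const lam) * (fps_exp 1 - fps_const lam) = 1"
    using assms by (intro inverse_mult_eq_1) simp
  then show ?thesis
    by (simp add: FE_gf_eq_FE_gf_0_mult_exp[of lam 0, symmetric] FE_gf_def mult.assoc)
qed

lemma FE_poly_eq_appell_poly: "FE_poly n x lam = appell_poly (\<lambda>i. FE_num i lam) n x"
proof -
  have "egf (\<lambda>n. FE_poly n x lam) = egf (\<lambda>n. appell_poly (\<lambda>i. FE_num i lam) n x)"
    using FE_gf_eq_FE_gf_0_mult_exp[of lam x]
    by (simp add: FE_gf_eq_egf FE_num_def egf_mult_fps_exp)
  then show ?thesis
    by (simp add: egf_inject fun_eq_iff)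
qed

lemma FE_num_0: "lam \<noteq> 1 \<Longrightarrow> FE_num 0 lam = 1"
  by (simp add: FE_num_def FE_poly_def FE_gf_def fps_inverse_def)

lemma FE_poly_at_one:
  assumes "lam \<noteq> 1"
  shows "FE_poly k 1 lam = lam * FE_num k lam + (if k = 0 then 1 - lam else 0)"
proof -
  have "FE_gf lam 1 = FE_gf lam 0 * (fps_exp 1 - fps_const lam) + fps_const lam * FE_gf lam 0"
    by (simp add: FE_gf_eq_FE_gf_0_mult_exp[of lam 1] algebra_simps)
  also have "\<dots> = fps_const (1 - lam) + fps_const lam * FE_gf lam 0"
    by (simp only: FE_gf_0_mult_denominator[OF assms])
  finally show ?thesis
    by (simp add: FE_poly_def FE_num_def algebra_simps)
qed

text \<open>
  The sequence d_m: the bracket of the theorem at k = n - m, divided by m + 1, plus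
  (1 - \<lambda>)/(m + 1) at m = 0, which accounts for the separate summand H_n(x|\<lambda>).
\<close>
definition FE_cofactor :: "complex \<Rightarrow> nat \<Rightarrow> complex" where
  "FE_cofactor lam m = (- lam * (\<Sum>i\<le>m. FE_num i lam * FE_num (m - i) lam) + 2 * lam * FE_num m lam
     + (if m = 0 then 1 - lam else 0)) / of_nat (Suc m)"

lemma appell_poly_self_conv_mean_FE_num_at_one:
  assumes "lam \<noteq> 1"
  shows "appell_poly (self_conv_mean (\<lambda>i. FE_num i lam)) m 1
    = lam * self_conv_mean (\<lambda>i. FE_num i lam) m + (1 - lam) * FE_cofactor lam m"
proof -
  define S where "S = (\<Sum>i\<le>m. FE_num i lam * FE_num (m - i) lam)"
  have "appell_poly (self_conv_mean (\<lambda>i. FE_num i lam)) m 1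
      = (\<Sum>k\<le>m. FE_poly k 1 lam * FE_poly (m - k) 1 lam) / of_nat (Suc m)"
    by (simp only: FE_poly_eq_appell_poly sum_appell_poly_mult_div)
  also have "\<dots> = (lam\<^sup>2 * S + 2 * lam * (1 - lam) * FE_num m lam
      + (if m = 0 then (1 - lam)\<^sup>2 else 0)) / of_nat (Suc m)"
    by (simp only: FE_poly_at_one[OF assms] sum_mult_rev_add_delta[where a = "\<lambda>i. FE_num i lam"] S_def)
  also have "\<dots> = lam * (S / of_nat (Suc m)) + (1 - lam) * FE_cofactor lam m"
    by (simp add: FE_cofactor_def S_def field_simps power2_eq_square del: of_nat_Suc)
  finally show ?thesis
    by (simp add: self_conv_mean_def S_def)
qed

lemma egf_self_conv_mean_FE_num:
  assumes "lam \<noteq> 1"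
  shows "egf (self_conv_mean (\<lambda>i. FE_num i lam)) = FE_gf lam 0 * egf (FE_cofactor lam)"
proof -
  define A where "A = egf (self_conv_mean (\<lambda>i. FE_num i lam))"
  define D where "D = egf (FE_cofactor lam)"
  have "A * fps_exp 1 = fps_const lam * A + fps_const (1 - lam) * D"
    by (simp add: A_def D_def egf_mult_fps_exp appell_poly_self_conv_mean_FE_num_at_one[OF assms]
        flip: egf_lincomb)
  then have "A * (fps_exp 1 - fps_const lam) = fps_const (1 - lam) * D"
    by (simp add: algebra_simps)
  then have "fps_const (1 - lam) * A = fps_const (1 - lam) * (FE_gf lam 0 * D)"
    by (metis FE_gf_0_mult_denominator[OF assms] mult.commute mult.left_commute)
  then show ?thesis
    using assms by (simp add: A_def D_def)
qed

lemma sum_FE_poly_FE_cofactor: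
  assumes "lam \<noteq> 1"
  shows "(\<Sum>k\<le>n. of_nat (n choose k) * FE_poly k x lam * FE_cofactor lam (n - k))
    = (\<Sum>k=0..<n. (of_nat (n choose k) / of_nat (n - k + 1)) *
          (- lam * (\<Sum>l=k..n. FE_num (l - k) lam * FE_num (n - l) lam)
           + 2 * lam * FE_num (n - k) lam) * FE_poly k x lam)
      + FE_poly n x lam"
proof -
  have "(\<Sum>l=k..n. FE_num (l - k) lam * FE_num (n - l) lam)
      = (\<Sum>i\<le>n - k. FE_num i lam * FE_num (n - k - i) lam)" if "k \<le> n" for k
    using that by (intro sum.reindex_bij_witness[where j = "\<lambda>l. l - k" and i = "\<lambda>i. i + k"]) auto
  then show ?thesis
    using assms
    by (simp add: lessThan_Suc_atMost[symmetric] atLeast0LessThan FE_cofactor_def FE_num_0 ac_simps)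
qed

theorem theorem3:
  fixes lam x :: complex and n :: nat
  assumes "lam \<noteq> 1"
  shows "(1 / of_nat (n + 1)) * (\<Sum>k=0..n. FE_poly k x lam * FE_poly (n - k) x lam)
    = (\<Sum>k=0..<n. (of_nat (n choose k) / of_nat (n - k + 1)) *
          (- lam * (\<Sum>l=k..n. FE_num (l - k) lam * FE_num (n - l) lam)
           + 2 * lam * FE_num (n - k) lam) * FE_poly k x lam)
      + FE_poly n x lam"
proof -
  let ?A = "self_conv_mean (\<lambda>i. FE_num i lam)"
  have "egf (\<lambda>n. appell_poly ?A n x) = egf ?A * fps_exp x"
    by (simp add: egf_mult_fps_exp)
  also have "\<dots> = FE_gf lam x * egf (FE_cofactor lam)"
    by (simp add: egf_self_conv_mean_FE_num[OF assms] FE_gf_eq_FE_gf_0_mult_exp[of lam x] ac_simps)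
  also have "\<dots> = egf (\<lambda>n. \<Sum>k\<le>n. of_nat (n choose k) * FE_poly k x lam * FE_cofactor lam (n - k))"
    by (simp add: FE_gf_eq_egf egf_mult)
  finally have "appell_poly ?A n x
      = (\<Sum>k\<le>n. of_nat (n choose k) * FE_poly k x lam * FE_cofactor lam (n - k))"
    by (simp add: egf_inject fun_eq_iff)
  moreover have "(1 / of_nat (n + 1)) * (\<Sum>k=0..n. FE_poly k x lam * FE_poly (n - k) x lam)
      = appell_poly ?A n x"
    by (simp add: FE_poly_eq_appell_poly atLeast0AtMost flip: sum_appell_poly_mult_div)
  ultimately show ?thesis
    by (simp only: sum_FE_poly_FE_cofactor[OF assms])
qed

end
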